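(* Let $\Gamma_1,\Gamma_2,\ldots$ be i.i.d. exponential random variables with mean $\bar\gamma>0$, $\Gamma_{[k]}=\sum_{l=1}^k\Gamma_l$ (with $\Gamma_{[0]}=0$), let $\gamma_{\mathrm{th}}\ge0$, $g>0$ and $$\mathrm{PER}(\gamma)=\begin{cases}1,&\gamma<\gamma_{\mathrm{th}},\\ \exp[-g(\gamma-\gamma_{\mathrm{th}})],&\gamma\ge\gamma_{\mathrm{th}}.\end{cases}$$ Set $\hat f^{\mathrm{avg}}_k=\mathbb{E}[\mathrm{PER}(\Gamma_{[k]})]$ for $k\ge1$ and $\hat f^{\mathrm{avg}}_0=1$. Then $$\bar K:=\sum_{k=0}^\infty \hat f^{\mathrm{avg}}_k=1+\frac{\gamma_{\mathrm{th}}+1/g}{\bar\gamma}.$$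
   Context: $\bar K$ is the average number of rounds of repetition-redundancy HARQ with an unlimited number of rounds in i.i.d. Rayleigh block fading, computed under the deterministic-error model in which the probability of failure after $k$ rounds is $\mathrm{PER}(\Gamma_{[k]})$. *)

theory Defs
  imports "HOL-Probability.Probability"
begin

definition PER :: "real \<Rightarrow> real \<Rightarrow> real \<Rightarrow> real" where
  "PER \<gamma>th g \<gamma> = (if \<gamma> < \<gamma>th then 1 else exp (- g * (\<gamma> - \<gamma>th)))"

definition fhat_avg :: "'a measure \<Rightarrow> (nat \<Rightarrow> 'a \<Rightarrow> real) \<Rightarrow> real \<Rightarrow> real \<Rightarrow> nat \<Rightarrow> real" where
  "fhat_avg M \<Gamma> \<gamma>th g k =
     (if k = 0 then 1 else
        prob_space.expectation M (\<lambda>\<omega>. PER \<gamma>th g (\<Sum>l\<in>{1..k}. \<Gamma> l \<omega>)))"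

end

theory Submission
  imports Defs
begin

text \<open>The sum of the first \<open>k\<close> SNRs has the Erlang density of shape \<open>k - 1\<close> and rate
  \<open>\<lambda> = 1/\<gamma>bar\<close>, and the Erlang densities of all shapes add up to the constant \<open>\<lambda>\<close> on
  \<open>[0,\<infinity>)\<close> (the exponential series). By monotone convergence the average number of
  rounds is therefore \<open>1 + \<lambda> \<integral>\<^sub>0\<^sup>\<infinity> PER(\<gamma>) d\<gamma>\<close>, and this integral is
  \<open>\<gamma>th + 1/g\<close>: the threshold region contributes its length, the exponential tail \<open>1/g\<close>.\<close>

lemma PER_measurable[measurable]: "PER a g \<in> borel_measurable borel"
  unfolding PER_def by measurable

lemma PER_nonneg: "0 \<le> PER a g x"
  by (simp add: PER_def)

lemma PER_le_one: "g \<ge> 0 \<Longrightarrow> PER a g x \<le> 1"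
  by (auto simp: PER_def mult_nonneg_nonneg)

lemma erlang_density_sums:
  assumes "l > 0"
  shows "(\<lambda>n. erlang_density n l x) sums (l * indicator {0..} x)"
proof (cases "x < 0")
  case True
  then show ?thesis by (simp add: erlang_density_def)
next
  case False
  have "(\<lambda>n. (l * exp (- l * x)) * ((l * x) ^ n / fact n)) sums ((l * exp (- l * x)) * exp (l * x))"
    using exp_converges[of "l * x"] by (intro sums_mult) (simp add: divide_inverse_commute)
  moreover have "(l * exp (- l * x)) * ((l * x) ^ n / fact n) = erlang_density n l x" for n
    using False by (simp add: erlang_density_def power_mult_distrib field_simps)
  moreover have "(l * exp (- l * x)) * exp (l * x) = l * indicator {0..} x"
    using False by (simp add: exp_minus field_simps)
  ultimately show ?thesis
    by (simp only:)
qed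

lemma suminf_ennreal_erlang_density:
  "l > 0 \<Longrightarrow> (\<Sum>n. ennreal (erlang_density n l x)) = ennreal (l * indicator {0..} x)"
  by (intro suminf_ennreal_eq erlang_density_sums) auto

lemma nn_integral_exp_decay_Ici:
  assumes "g > 0"
  shows "(\<integral>\<^sup>+x. ennreal (exp (- g * (x - a))) * indicator {a..} x \<partial>lborel) = ennreal (1 / g)"
proof -
  have "(\<integral>\<^sup>+x. ennreal (exp (- g * (x - a))) * indicator {a..} x \<partial>lborel)
      = \<bar>1 / g\<bar> * (\<integral>\<^sup>+x. ennreal (exp (- g * ((a + (1 / g) * x) - a))) * indicator {a..} (a + (1 / g) * x) \<partial>lborel)"
    using assms by (intro nn_integral_real_affine) auto
  also have "(\<integral>\<^sup>+x. ennreal (exp (- g * ((a + (1 / g) * x) - a))) * indicator {a..} (a + (1 / g) * x) \<partial>lborel)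
      = (\<integral>\<^sup>+x. ennreal (x ^ 0 * exp (- x)) * indicator {0..} x \<partial>lborel)"
    using assms by (intro nn_integral_cong) (auto split: split_indicator simp: field_simps)
  also have "\<dots> = 1"
    using nn_intergal_power_times_exp_Ici[of 0] by simp
  finally show ?thesis
    using assms by simp
qed

lemma nn_integral_PER:
  assumes "a \<ge> 0" and "g > 0"
  shows "(\<integral>\<^sup>+x. indicator {0..} x * ennreal (PER a g x) \<partial>lborel) = ennreal (a + 1 / g)"
proof -
  have "(\<integral>\<^sup>+x. indicator {0..} x * ennreal (PER a g x) \<partial>lborel)
      = (\<integral>\<^sup>+x. indicator {0..<a} x + ennreal (exp (- g * (x - a))) * indicator {a..} x \<partial>lborel)"
    using assms by (intro nn_integral_cong) (auto split: split_indicator simp: PER_def)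
  also have "\<dots> = emeasure lborel {0..<a} + ennreal (1 / g)"
    using nn_integral_exp_decay_Ici[OF assms(2)] by (subst nn_integral_add) auto
  also have "\<dots> = ennreal (a + 1 / g)"
    using assms by (simp add: ennreal_plus)
  finally show ?thesis .
qed

lemma fhat_avg_nonneg: "0 \<le> fhat_avg M \<Gamma> a g k"
  by (simp add: fhat_avg_def PER_nonneg)

lemma (in prob_space) ennreal_expectation_distributed:
  assumes "distributed M lborel X f" and [measurable]: "h \<in> borel_measurable borel"
    and "\<And>x. 0 \<le> h x" and "\<And>x. h x \<le> B"
  shows "ennreal (expectation (\<lambda>\<omega>. h (X \<omega>))) = (\<integral>\<^sup>+x. ennreal (f x) * ennreal (h x) \<partial>lborel)"
proof -
  have [measurable]: "X \<in> borel_measurable M"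
    using distributed_measurable[OF assms(1)] by simp
  have "integrable M (\<lambda>\<omega>. h (X \<omega>))"
    using assms by (intro integrable_const_bound[where B = B]) auto
  then have "ennreal (expectation (\<lambda>\<omega>. h (X \<omega>))) = (\<integral>\<^sup>+\<omega>. ennreal (h (X \<omega>)) \<partial>M)"
    using assms by (intro nn_integral_eq_integral[symmetric]) auto
  also have "\<dots> = (\<integral>\<^sup>+x. ennreal (f x) * ennreal (h x) \<partial>lborel)"
    using assms(1) by (intro distributed_nn_integral[symmetric]) auto
  finally show ?thesis .
qed

theorem mainTheorem8:
  fixes M :: "'a measure" and \<Gamma> :: "nat \<Rightarrow> 'a \<Rightarrow> real"
    and \<gamma>bar \<gamma>th g :: real
  assumes "prob_space M"
    and "\<gamma>bar > 0" and "\<gamma>th \<ge> 0" and "g > 0"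
    and "prob_space.indep_vars M (\<lambda>_. borel) \<Gamma> {1..}"
    and "\<And>l. l \<ge> 1 \<Longrightarrow> distributed M lborel (\<Gamma> l) (exponential_density (1 / \<gamma>bar))"
  shows "(\<lambda>k. fhat_avg M \<Gamma> \<gamma>th g k) sums (1 + (\<gamma>th + 1 / g) / \<gamma>bar)"
proof -
  interpret prob_space M by fact
  define l where "l = 1 / \<gamma>bar"
  have "l > 0"
    using assms(2) by (simp add: l_def)
  have erlang: "distributed M lborel (\<lambda>\<omega>. \<Sum>i\<in>{1..Suc k}. \<Gamma> i \<omega>) (erlang_density k l)" for k
    using exponential_distributed_sum[of "{1..Suc k}" l \<Gamma>] \<open>l > 0\<close> assms(6)
      indep_vars_subset[OF assms(5)] by (simp add: l_def)
  have fhat_Suc: "ennreal (fhat_avg M \<Gamma> \<gamma>th g (Suc k))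
      = (\<integral>\<^sup>+x. ennreal (erlang_density k l x) * ennreal (PER \<gamma>th g x) \<partial>lborel)" for k
    using ennreal_expectation_distributed[OF erlang PER_measurable PER_nonneg PER_le_one] assms(4)
    by (simp add: fhat_avg_def)
  have "(\<Sum>k. ennreal (fhat_avg M \<Gamma> \<gamma>th g (Suc k)))
      = (\<integral>\<^sup>+x. (\<Sum>k. ennreal (erlang_density k l x)) * ennreal (PER \<gamma>th g x) \<partial>lborel)"
    unfolding fhat_Suc ennreal_suminf_multc[symmetric] by (rule nn_integral_suminf[symmetric]) simp
  also have "\<dots> = ennreal l * (\<integral>\<^sup>+x. indicator {0..} x * ennreal (PER \<gamma>th g x) \<partial>lborel)"
    using \<open>l > 0\<close> by (simp add: suminf_ennreal_erlang_density ennreal_mult ennreal_indicator mult.assoc nn_integral_cmult)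
  also have "\<dots> = ennreal (l * (\<gamma>th + 1 / g))"
    using \<open>l > 0\<close> assms(3,4) by (simp add: nn_integral_PER ennreal_mult)
  finally have "(\<lambda>k. ennreal (fhat_avg M \<Gamma> \<gamma>th g (Suc k))) sums ennreal (l * (\<gamma>th + 1 / g))"
    using summable_sums[OF summableI] by metis
  then have "(\<lambda>k. fhat_avg M \<Gamma> \<gamma>th g (Suc k)) sums (l * (\<gamma>th + 1 / g))"
    using \<open>l > 0\<close> assms(3,4) by (simp add: fhat_avg_nonneg)
  then have "(\<lambda>k. fhat_avg M \<Gamma> \<gamma>th g k) sums (l * (\<gamma>th + 1 / g) + fhat_avg M \<Gamma> \<gamma>th g 0)"
    by (simp only: sums_Suc_iff)
  then show ?thesis
    by (simp add: fhat_avg_def l_def add.commute)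
qed

end
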